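(* Let $n>k\geq 1$ and $r=n-k$. There exists an $(n,k,\ell)$ MDS array code with $\ell=\mathrm{lcm}(1,2,\ldots,r)\cdot r^n$ that satisfies the $(h,d)$-optimal repair property simultaneously for all integer pairs $(h,d)$ with $1\leq h\leq n-k$, $k\leq d\leq n-h$ and $h\mid(d-k)$.
   Context: An $(n,k,\ell)$ MDS array code over a finite field $F$ is an $F$-linear set of vectors $(\bm c_1,\ldots,\bm c_n)$, $\bm c_i\in F^\ell$ (node $i$ stores $\bm c_i$), of dimension $k\ell$, such that any $k$ coordinates $\bm c_i$ determine the codeword. For $1\leq h\leq n-k$, $k\leq d\leq n-h$, the $(h,d)$-optimal repair property means: for every $h$-subset $\mathcal{H}\subseteq[n]$ of failed nodes and every $d$-subset $\mathcal{R}\subseteq[n]\setminus\mathcal{H}$ of helper nodes, each helper $j\in\mathcal{R}$ can send $\beta=\frac{h\ell}{d-k+h}$ symbols of $F$ computed from $\bm c_j$ such that from these $\frac{dh\ell}{d-k+h}$ symbols in total all $\bm c_i$, $i\in\mathcal{H}$, are determined, for every codeword (equality in the cut-set bound). *)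

theory Defs
  imports "HOL-Algebra.Ring" "HOL-Algebra.Ring_Divisibility"
begin

text \<open>A finite field is represented as a HOL-Algebra field structure whose
carrier is a set of natural numbers (every finite field is isomorphic to such a one).
Nodes are indexed by 0..n-1, node contents by 0..l-1.  An array word is a function
c with c i j the j-th symbol stored at node i; outside the index range it is zero.\<close>

definition arr_space :: "nat ring \<Rightarrow> nat \<Rightarrow> nat \<Rightarrow> (nat \<Rightarrow> nat \<Rightarrow> nat) set" where
  "arr_space F n l = {c. \<forall>i j. (i < n \<and> j < l \<longrightarrow> c i j \<in> carrier F) \<and>
                              (\<not> (i < n \<and> j < l) \<longrightarrow> c i j = \<zero>\<^bsub>F\<^esub>)}"

definition linear_array_code :: "nat ring \<Rightarrow> nat \<Rightarrow> nat \<Rightarrow> (nat \<Rightarrow> nat \<Rightarrow> nat) set \<Rightarrow> bool" where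
  "linear_array_code F n l C \<longleftrightarrow>
     C \<subseteq> arr_space F n l \<and> C \<noteq> {} \<and>
     (\<forall>c\<in>C. \<forall>c'\<in>C. (\<lambda>i j. c i j \<oplus>\<^bsub>F\<^esub> c' i j) \<in> C) \<and>
     (\<forall>a\<in>carrier F. \<forall>c\<in>C. (\<lambda>i j. a \<otimes>\<^bsub>F\<^esub> c i j) \<in> C)"

text \<open>(n,k,l) MDS array code: F-linear, of dimension k*l (over the finite field F
this means it has |F|^(k l) elements), and any k nodes determine the codeword.\<close>
definition mds_array_code :: "nat ring \<Rightarrow> nat \<Rightarrow> nat \<Rightarrow> nat \<Rightarrow> (nat \<Rightarrow> nat \<Rightarrow> nat) set \<Rightarrow> bool" where
  "mds_array_code F n k l C \<longleftrightarrow>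
     linear_array_code F n l C \<and>
     card C = card (carrier F) ^ (k * l) \<and>
     (\<forall>K. K \<subseteq> {..<n} \<and> card K = k \<longrightarrow>
        (\<forall>c\<in>C. \<forall>c'\<in>C. (\<forall>i\<in>K. c i = c' i) \<longrightarrow> c = c'))"

text \<open>(h,d)-optimal repair: for every set H of h failed nodes and every set R of d
helper nodes disjoint from H, every helper j sends beta = h l/(d-k+h) symbols of F
computed (by an arbitrary function) from its content c j, and these symbols determine
the contents of all failed nodes, for every codeword.\<close>
definition optimal_repair :: "nat ring \<Rightarrow> nat \<Rightarrow> nat \<Rightarrow> nat \<Rightarrow> (nat \<Rightarrow> nat \<Rightarrow> nat) set \<Rightarrow> nat \<Rightarrow> nat \<Rightarrow> bool" where
  "optimal_repair F n k l C h d \<longleftrightarrow>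
     (\<forall>H R. H \<subseteq> {..<n} \<and> card H = h \<and> R \<subseteq> {..<n} - H \<and> card R = d \<longrightarrow>
       (\<exists>f :: nat \<Rightarrow> (nat \<Rightarrow> nat) \<Rightarrow> nat \<Rightarrow> nat.
          (\<forall>j\<in>R. \<forall>c\<in>C. \<forall>t < (h * l) div (d - k + h). f j (c j) t \<in> carrier F) \<and>
          (\<forall>c\<in>C. \<forall>c'\<in>C.
             (\<forall>j\<in>R. \<forall>t < (h * l) div (d - k + h). f j (c j) t = f j (c' j) t) \<longrightarrow>
             (\<forall>i\<in>H. c i = c' i))))"

end

theory Submission
  imports Defs "HOL-Computational_Algebra.Primes" "HOL-Number_Theory.Cong"
begin

(* Let r = n - k and let p > n r be prime.  A coordinate x < l is read as its base-r digits
   x_0, ..., x_(n-1) together with x div r^n < L = Lcm {1..r}.  The code is the l-fold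
   interleaving of generalized Reed-Solomon codes: at every coordinate x the symbols satisfy
   the r parity checks  sum_i lambda_(i,x)^t c_i(x) = 0  (t < r)  with evaluation points
   lambda_(i,x) = i r + x_i, which lie in disjoint ranges for different nodes.  Vandermonde
   systems give the MDS property and the dimension.

   To repair h nodes H from d helpers put s = (d - k)/h + 1, so that h s = d - k + h <= r.
   The coordinates split into l/s groups of at most s elements on which the digits of the
   nodes outside H are constant and the digits of each node in H are pairwise distinct: shift
   all digits at H by a common amount mod r, and let the anchor (x div r^n) r + x_(i0), i0 in H,
   run through a block of s consecutive numbers (this is where s | L is used).  Every helper
   sends the sum of its symbols over each group.  Summing the parity checks over a group
   leaves r equations in the h |G| lost symbols and the n - h - d group sums of the idle nodes,
   all with distinct evaluation points: once more a uniquely solvable Vandermonde system. *)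

definition prime_field :: "nat \<Rightarrow> nat ring" where
  "prime_field p = \<lparr>carrier = {..<p}, monoid.mult = (\<lambda>x y. x * y mod p), one = 1,
                    zero = 0, add = (\<lambda>x y. (x + y) mod p)\<rparr>"

lemma prime_field_simps [simp]:
  "carrier (prime_field p) = {..<p}" "mult (prime_field p) x y = x * y mod p"
  "one (prime_field p) = 1" "zero (prime_field p) = 0" "add (prime_field p) x y = (x + y) mod p"
  by (simp_all add: prime_field_def)

lemma field_prime_field:
  assumes "prime p"
  shows "field (prime_field p)"
proof -
  have p1: "p > 1" using assms prime_gt_1_nat by blast
  have "abelian_group (prime_field p)"
  proof (rule abelian_groupI)
    fix x assume "x \<in> carrier (prime_field p)"
    then show "\<exists>y\<in>carrier (prime_field p). y \<oplus>\<^bsub>prime_field p\<^esub> x = \<zero>\<^bsub>prime_field p\<^esub>"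
      using p1 by (intro bexI[of _ "(p - x) mod p"]) (auto simp: mod_add_left_eq)
  qed (use p1 in \<open>auto simp: mod_add_left_eq mod_add_right_eq add_ac\<close>)
  moreover have "comm_monoid (prime_field p)"
    by (rule comm_monoidI) (use p1 in \<open>auto simp: mod_mult_left_eq mod_mult_right_eq mult_ac\<close>)
  ultimately have cring: "cring (prime_field p)"
    by (rule cringI) (simp add: mod_mult_left_eq mod_mult_right_eq mod_add_eq distrib_right)
  show ?thesis
  proof (rule cring.field_intro2[OF cring])
    fix x assume x: "x \<in> carrier (prime_field p) - {\<zero>\<^bsub>prime_field p\<^esub>}"
    then have "coprime x p"
      using assms by (auto simp: coprime_commute prime_imp_coprime_nat nat_dvd_not_less)
    then obtain y where "[x * y = 1] (mod p)"
      using cong_solve_coprime_nat by (metis One_nat_def)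
    then have "x * (y mod p) mod p = 1"
      using p1 by (simp add: cong_def mod_mult_right_eq)
    then show "x \<in> Units (prime_field p)"
      using x p1 by (auto simp: Units_def mult.commute intro!: bexI[of _ "y mod p"])
  qed simp
qed

lemma vandermonde_unique_mod:
  fixes p :: int and mu z :: "'a \<Rightarrow> int"
  assumes "prime p" and "finite P" and "card P \<le> r" and "inj_on (\<lambda>q. mu q mod p) P"
    and "\<forall>t<r. p dvd (\<Sum>q\<in>P. mu q ^ t * z q)"
  shows "\<forall>q\<in>P. p dvd z q"
  using assms(2-)
proof (induction P arbitrary: r z rule: finite_induct)
  case empty
  then show ?case by simp
next
  case (insert m P r z)
  from insert.prems(1) insert.hyps obtain r' where r: "r = Suc r'" and card: "card P \<le> r'"
    by (cases r) auto
  \<comment> \<open>the row operation (row t+1) - mu m * (row t) eliminates the unknown at m\<close>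
  define z' where "z' q = (mu q - mu m) * z q" for q
  have "p dvd (\<Sum>q\<in>P. mu q ^ t * z' q)" if "t < r'" for t
  proof -
    have "(\<Sum>q\<in>P. mu q ^ t * z' q) =
          (\<Sum>q\<in>insert m P. mu q ^ Suc t * z q) - mu m * (\<Sum>q\<in>insert m P. mu q ^ t * z q)"
      using insert.hyps
      by (simp add: z'_def sum_distrib_left sum_subtractf[symmetric] algebra_simps)
    moreover have "p dvd (\<Sum>q\<in>insert m P. mu q ^ Suc t * z q)"
      and "p dvd (\<Sum>q\<in>insert m P. mu q ^ t * z q)"
      using insert.prems(3) that r by auto
    ultimately show ?thesis
      by (simp add: dvd_diff dvd_mult)
  qed
  then have IH: "\<forall>q\<in>P. p dvd z' q"
    using insert.IH[OF card] insert.prems(2) by (simp add: inj_on_insert)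
  have zP: "p dvd z q" if q: "q \<in> P" for q
  proof -
    have "mu q mod p \<noteq> mu m mod p"
      using insert.prems(2) insert.hyps q by (auto simp: inj_on_def)
    then have "\<not> p dvd (mu q - mu m)"
      by (simp add: mod_eq_dvd_iff)
    then show ?thesis
      using IH q \<open>prime p\<close> by (auto simp: z'_def prime_dvd_mult_iff)
  qed
  have "p dvd (\<Sum>q\<in>insert m P. mu q ^ 0 * z q)"
    using insert.prems(3) r by blast
  then have "p dvd (z m + (\<Sum>q\<in>P. z q))"
    using insert.hyps by simp
  then have "p dvd z m"
    using zP by (simp add: dvd_sum dvd_add_left_iff)
  with zP show ?case by simp
qed

lemma nat_eq_if_dvd_diff:
  fixes a b p :: nat
  assumes "a < p" and "b < p" and "int p dvd (int a - int b)"
  shows "a = b"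
  using assms by (metis cong_iff_dvd_diff cong_int_iff cong_less_imp_eq_nat zero_le)

lemma inj_on_int_mod_if_less:
  fixes f :: "'a \<Rightarrow> nat"
  assumes "inj_on f Q" and "\<forall>q\<in>Q. f q < p"
  shows "inj_on (\<lambda>q. int (f q) mod int p) Q"
  using assms by (auto simp: inj_on_def of_nat_mod[symmetric])

lemma vandermonde_solvable_mod:
  fixes p :: nat and mu :: "'a \<Rightarrow> int" and b :: "nat \<Rightarrow> int"
  assumes "prime p" and "finite Q" and "card Q = r" and "inj_on (\<lambda>q. mu q mod int p) Q"
  shows "\<exists>z. (\<forall>q\<in>Q. z q < p) \<and> (\<forall>t<r. int p dvd (b t + (\<Sum>q\<in>Q. mu q ^ t * int (z q))))"
proof -
  define S where "S z t = b t + (\<Sum>q\<in>Q. mu q ^ t * int (z q))" for z t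
  define Phi where "Phi z = (\<lambda>t\<in>{..<r}. S z t mod int p)" for z
  let ?A = "Q \<rightarrow>\<^sub>E {..<p}" and ?B = "{..<r} \<rightarrow>\<^sub>E {0..<int p}"
  have p0: "p > 0"
    using assms(1) prime_gt_0_nat by blast
  \<comment> \<open>Phi is injective by uniqueness, hence onto the equinumerous set of residue vectors\<close>
  have inj: "inj_on Phi ?A"
  proof (rule inj_onI)
    fix z z' assume z: "z \<in> ?A" and z': "z' \<in> ?A" and eq: "Phi z = Phi z'"
    have "int p dvd (\<Sum>q\<in>Q. mu q ^ t * (int (z q) - int (z' q)))" if "t < r" for t
    proof -
      have "S z t mod int p = S z' t mod int p"
        using fun_cong[OF eq, of t] that by (simp add: Phi_def)
      then show ?thesis
        by (simp add: mod_eq_dvd_iff S_def sum_subtractf[symmetric] algebra_simps)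
    qed
    then have "\<forall>q\<in>Q. int p dvd (int (z q) - int (z' q))"
      using vandermonde_unique_mod[of "int p" Q r mu "\<lambda>q. int (z q) - int (z' q)"] assms by simp
    then show "z = z'"
      using z z' by (intro PiE_ext[OF z z']) (auto intro: nat_eq_if_dvd_diff)
  qed
  moreover have sub: "Phi ` ?A \<subseteq> ?B"
    using p0 unfolding Phi_def by (intro image_subsetI) (simp add: restrict_PiE_iff)
  moreover have "card (Phi ` ?A) = card ?B"
    using assms(2,3) card_image[OF inj] by (simp add: card_PiE)
  ultimately have "Phi ` ?A = ?B"
    by (intro card_subset_eq) (auto simp: finite_PiE)
  moreover have "(\<lambda>t\<in>{..<r}. 0) \<in> ?B"
    using p0 by (simp add: restrict_PiE_iff)
  ultimately obtain z where z: "z \<in> ?A" and zero: "Phi z = (\<lambda>t\<in>{..<r}. 0)"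
    by (metis (no_types, lifting) imageE)
  have "int p dvd S z t" if "t < r" for t
  proof -
    have "Phi z t = 0"
      using zero that by simp
    then show ?thesis
      using that by (simp add: Phi_def dvd_eq_mod_eq_0)
  qed
  with z show ?thesis
    by (intro exI[of _ z]) (auto simp: S_def)
qed

definition parity_code ::
    "nat \<Rightarrow> nat \<Rightarrow> nat \<Rightarrow> nat \<Rightarrow> (nat \<Rightarrow> nat \<Rightarrow> nat) \<Rightarrow> (nat \<Rightarrow> nat \<Rightarrow> nat) set" where
  "parity_code p n r l lam = {c \<in> arr_space (prime_field p) n l.
     \<forall>x<l. \<forall>t<r. int p dvd (\<Sum>i<n. int (lam i x) ^ t * int (c i x))}"

lemma parity_code_closed_lincomb:
  assumes c: "c \<in> parity_code p n r l lam" and c': "c' \<in> parity_code p n r l lam"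
    and e: "e \<in> arr_space (prime_field p) n l"
    and cong: "\<And>i x. [int (e i x) = \<alpha> * int (c i x) + \<beta> * int (c' i x)] (mod int p)"
  shows "e \<in> parity_code p n r l lam"
proof -
  have "int p dvd (\<Sum>i<n. int (lam i x) ^ t * int (e i x))" if "x < l" "t < r" for x t
  proof -
    have "[\<Sum>i<n. int (lam i x) ^ t * int (e i x) =
           \<Sum>i<n. int (lam i x) ^ t * (\<alpha> * int (c i x) + \<beta> * int (c' i x))] (mod int p)"
      by (intro cong_sum cong_scalar_left cong)
    also have "(\<Sum>i<n. int (lam i x) ^ t * (\<alpha> * int (c i x) + \<beta> * int (c' i x))) =
        \<alpha> * (\<Sum>i<n. int (lam i x) ^ t * int (c i x)) + \<beta> * (\<Sum>i<n. int (lam i x) ^ t * int (c' i x))"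
      by (simp add: sum_distrib_left sum.distrib algebra_simps)
    also have "[\<dots> = \<alpha> * 0 + \<beta> * 0] (mod int p)"
      using c c' that by (intro cong_add cong_scalar_left) (auto simp: parity_code_def cong_0_iff)
    finally show ?thesis
      by (simp add: cong_0_iff)
  qed
  with e show ?thesis
    by (simp add: parity_code_def)
qed

lemma linear_parity_code:
  assumes "prime p"
  shows "linear_array_code (prime_field p) n l (parity_code p n r l lam)"
proof -
  have p0: "p > 0"
    using assms prime_gt_0_nat by blast
  have arr: "c \<in> arr_space (prime_field p) n l" if "c \<in> parity_code p n r l lam" for c
    using that by (simp add: parity_code_def)
  have "(\<lambda>i x. 0) \<in> parity_code p n r l lam"
    using p0 by (simp add: parity_code_def arr_space_def)
  moreover have "(\<lambda>i x. (c i x + c' i x) mod p) \<in> parity_code p n r l lam"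
    if "c \<in> parity_code p n r l lam" "c' \<in> parity_code p n r l lam" for c c'
  proof (rule parity_code_closed_lincomb[OF that, where \<alpha> = 1 and \<beta> = 1])
    show "(\<lambda>i x. (c i x + c' i x) mod p) \<in> arr_space (prime_field p) n l"
      using arr[OF that(1)] arr[OF that(2)] p0 by (simp add: arr_space_def)
  qed (metis cong_int_iff cong_mod_left cong_refl mult_1 of_nat_add)
  moreover have "(\<lambda>i x. a * c i x mod p) \<in> parity_code p n r l lam"
    if "c \<in> parity_code p n r l lam" for a c
  proof (rule parity_code_closed_lincomb[OF that that, where \<alpha> = "int a" and \<beta> = 0])
    show "(\<lambda>i x. a * c i x mod p) \<in> arr_space (prime_field p) n l"
      using arr[OF that] p0 by (simp add: arr_space_def)
  qed (metis cong_int_iff cong_mod_left cong_refl add_0_right mult_zero_left of_nat_mult)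
  ultimately show ?thesis
    using arr by (auto simp: linear_array_code_def)
qed

lemma parity_code_less:
  "c \<in> parity_code p n r l lam \<Longrightarrow> i < n \<Longrightarrow> x < l \<Longrightarrow> c i x < p"
  by (simp add: parity_code_def arr_space_def)

lemma parity_code_eq_0:
  "c \<in> parity_code p n r l lam \<Longrightarrow> \<not> (i < n \<and> x < l) \<Longrightarrow> c i x = 0"
  by (simp add: parity_code_def arr_space_def)

lemma parity_check_diff:
  assumes "c \<in> parity_code p n r l lam" and "c' \<in> parity_code p n r l lam" and "x < l" and "t < r"
  shows "int p dvd (\<Sum>i<n. int (lam i x) ^ t * (int (c i x) - int (c' i x)))"
  using assms by (simp add: parity_code_def right_diff_distrib sum_subtractf dvd_diff)

lemma parity_code_erasure:
  assumes "prime p" and c: "c \<in> parity_code p n r l lam" and c': "c' \<in> parity_code p n r l lam"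
    and "x < l" and P: "P \<subseteq> {..<n}" "card P \<le> r"
    and "inj_on (\<lambda>i. lam i x) P" and "\<forall>i\<in>P. lam i x < p"
    and agree: "\<forall>i\<in>{..<n} - P. c i x = c' i x"
  shows "\<forall>i\<in>P. c i x = c' i x"
proof -
  have "int p dvd (\<Sum>i\<in>P. int (lam i x) ^ t * (int (c i x) - int (c' i x)))" if "t < r" for t
  proof -
    have "(\<Sum>i<n. int (lam i x) ^ t * (int (c i x) - int (c' i x))) =
          (\<Sum>i\<in>P. int (lam i x) ^ t * (int (c i x) - int (c' i x)))"
      using P(1) agree by (intro sum.mono_neutral_right) auto
    then show ?thesis
      using parity_check_diff[OF c c' \<open>x < l\<close> that] by simp
  qed
  then have "\<forall>i\<in>P. int p dvd (int (c i x) - int (c' i x))"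
    using assms finite_subset[OF P(1)] inj_on_int_mod_if_less
    by (intro vandermonde_unique_mod[of "int p" P r]) auto
  then show ?thesis
    using P(1) \<open>x < l\<close> by (auto intro: nat_eq_if_dvd_diff parity_code_less[OF c] parity_code_less[OF c'])
qed

lemma parity_code_eq_if_agree:
  assumes "prime p" and "k \<le> n"
    and inj: "\<forall>x<l. inj_on (\<lambda>i. lam i x) {..<n}" and less: "\<forall>i<n. \<forall>x<l. lam i x < p"
    and K: "K \<subseteq> {..<n}" "card K = k"
    and c: "c \<in> parity_code p n (n - k) l lam" and c': "c' \<in> parity_code p n (n - k) l lam"
    and agree: "\<forall>i\<in>K. c i = c' i"
  shows "c = c'"
proof (intro ext)
  fix i x
  show "c i x = c' i x"
  proof (cases "i < n \<and> x < l")
    case True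
    have "card ({..<n} - K) \<le> n - k"
      using K by (simp add: card_Diff_subset finite_subset)
    moreover have "inj_on (\<lambda>i. lam i x) ({..<n} - K)"
      using inj True by (blast intro: inj_on_subset)
    moreover have "\<forall>j\<in>{..<n} - K. lam j x < p"
      using less True by blast
    moreover have "\<forall>j\<in>{..<n} - ({..<n} - K). c j x = c' j x"
      using agree K by auto
    ultimately have "\<forall>j\<in>{..<n} - K. c j x = c' j x"
      using parity_code_erasure[OF \<open>prime p\<close> c c', of x "{..<n} - K"] True by blast
    then show ?thesis
      using True agree by (cases "i \<in> K") auto
  qed (simp add: parity_code_eq_0[OF c] parity_code_eq_0[OF c'])
qed

lemma parity_code_systematic:
  assumes p: "prime p" and "k \<le> n"
    and inj: "\<forall>x<l. inj_on (\<lambda>i. lam i x) {..<n}" and less: "\<forall>i<n. \<forall>x<l. lam i x < p"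
    and Y: "\<forall>i<k. \<forall>x<l. Y i x < p"
  shows "\<exists>c\<in>parity_code p n (n - k) l lam. \<forall>i<k. \<forall>x<l. c i x = Y i x"
proof -
  define completes where "completes x z \<longleftrightarrow> (\<forall>q\<in>{k..<n}. z q < p) \<and> (\<forall>t<n - k. int p dvd
      ((\<Sum>i<k. int (lam i x) ^ t * int (Y i x)) + (\<Sum>q\<in>{k..<n}. int (lam q x) ^ t * int (z q))))"
    for x z
  have "\<forall>x\<in>{..<l}. \<exists>z. completes x z"
    unfolding completes_def using inj less
    by (intro ballI vandermonde_solvable_mod[OF p]) (auto intro!: inj_on_int_mod_if_less intro: inj_on_subset)
  then obtain Z where Z: "\<forall>x\<in>{..<l}. completes x (Z x)"
    by (auto dest!: bchoice)
  define c where "c i x = (if x < l \<and> i < k then Y i x else if x < l \<and> i < n then Z x i else 0)" for i x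
  have "int p dvd (\<Sum>i<n. int (lam i x) ^ t * int (c i x))" if "x < l" "t < n - k" for x t
  proof -
    have "(\<Sum>i<n. int (lam i x) ^ t * int (c i x)) =
        (\<Sum>i<k. int (lam i x) ^ t * int (Y i x)) + (\<Sum>q\<in>{k..<n}. int (lam q x) ^ t * int (Z x q))"
      using \<open>k \<le> n\<close> \<open>x < l\<close>
      by (simp add: c_def lessThan_atLeast0 sum.atLeastLessThan_concat[symmetric, of 0 k n])
    then show ?thesis
      using Z that by (simp add: completes_def)
  qed
  moreover have "c \<in> arr_space (prime_field p) n l"
    using Y Z \<open>k \<le> n\<close> by (auto simp: arr_space_def c_def completes_def)
  ultimately have "c \<in> parity_code p n (n - k) l lam"
    by (simp add: parity_code_def)
  then show ?thesis
    by (intro bexI[of _ c]) (simp_all add: c_def)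
qed

lemma card_parity_code:
  assumes p: "prime p" and "k \<le> n"
    and inj: "\<forall>x<l. inj_on (\<lambda>i. lam i x) {..<n}" and less: "\<forall>i<n. \<forall>x<l. lam i x < p"
  shows "card (parity_code p n (n - k) l lam) = p ^ (k * l)"
proof -
  let ?C = "parity_code p n (n - k) l lam" and ?T = "({..<k} \<times> {..<l}) \<rightarrow>\<^sub>E {..<p}"
  define rho where "rho c = (\<lambda>(i, x)\<in>{..<k} \<times> {..<l}. c i x)" for c :: "nat \<Rightarrow> nat \<Rightarrow> nat"
  have "inj_on rho ?C"
  proof (rule inj_onI)
    fix c c' assume c: "c \<in> ?C" and c': "c' \<in> ?C" and eq: "rho c = rho c'"
    have "c i x = c' i x" if "i < k" for i x
    proof (cases "x < l")
      case True
      then show ?thesis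
        using fun_cong[OF eq, of "(i, x)"] that by (simp add: rho_def)
    qed (simp add: parity_code_eq_0[OF c] parity_code_eq_0[OF c'])
    then show "c = c'"
      using assms by (intro parity_code_eq_if_agree[OF p _ inj less _ _ c c', of "{..<k}"]) auto
  qed
  moreover have "rho ` ?C = ?T"
  proof
    show "rho ` ?C \<subseteq> ?T"
      using \<open>k \<le> n\<close> unfolding rho_def
      by (intro image_subsetI) (auto simp: restrict_PiE_iff intro: parity_code_less)
  next
    show "?T \<subseteq> rho ` ?C"
    proof
      fix Y assume Y: "Y \<in> ?T"
      then obtain c where "c \<in> ?C" and "\<forall>i<k. \<forall>x<l. c i x = Y (i, x)"
        using parity_code_systematic[OF assms, of "\<lambda>i x. Y (i, x)"] by auto
      moreover have "rho c = Y"
        using Y calculation(2) by (auto simp: rho_def PiE_iff extensional_def)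
      ultimately show "Y \<in> rho ` ?C"
        by blast
    qed
  qed
  ultimately have "card ?C = card ?T"
    by (metis card_image)
  then show ?thesis
    by (simp add: card_PiE card_cartesian_product)
qed

lemma mds_parity_code:
  assumes "prime p" and "k \<le> n"
    and "\<forall>x<l. inj_on (\<lambda>i. lam i x) {..<n}" and "\<forall>i<n. \<forall>x<l. lam i x < p"
  shows "mds_array_code (prime_field p) n k l (parity_code p n (n - k) l lam)"
  using assms linear_parity_code[OF \<open>prime p\<close>] card_parity_code[OF assms]
    parity_code_eq_if_agree[OF assms]
  by (auto simp: mds_array_code_def)

lemma parity_check_group_sum:
  assumes c: "c \<in> parity_code p n r l lam" and c': "c' \<in> parity_code p n r l lam"
    and H: "H \<subseteq> {..<n}" and R: "R \<subseteq> {..<n} - H" and G: "G \<subseteq> {..<l}"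
    and const: "\<forall>j\<in>{..<n} - H. \<forall>y\<in>G. lam j y = lam j x"
    and sums: "\<forall>j\<in>R. int p dvd (\<Sum>y\<in>G. int (c j y) - int (c' j y))"
    and "t < r"
  shows "int p dvd ((\<Sum>j\<in>H. \<Sum>y\<in>G. int (lam j y) ^ t * (int (c j y) - int (c' j y))) +
           (\<Sum>j\<in>{..<n} - H - R. int (lam j x) ^ t * (\<Sum>y\<in>G. int (c j y) - int (c' j y))))"
proof -
  define U where "U = {..<n} - H - R"
  define e where "e j y = int (c j y) - int (c' j y)" for j y
  define T where "T j = (\<Sum>y\<in>G. int (lam j y) ^ t * e j y)" for j
  have "int p dvd (\<Sum>y\<in>G. \<Sum>j<n. int (lam j y) ^ t * e j y)"
    using parity_check_diff[OF c c' _ \<open>t < r\<close>] G by (intro dvd_sum[of G]) (auto simp: e_def)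
  then have all: "int p dvd (\<Sum>j<n. T j)"
    unfolding T_def by (subst sum.swap)
  have other: "T j = int (lam j x) ^ t * (\<Sum>y\<in>G. e j y)" if "j \<in> {..<n} - H" for j
    using const that by (simp add: T_def sum_distrib_left)
  have helpers: "int p dvd (\<Sum>j\<in>R. T j)"
    using R sums other by (auto intro!: dvd_sum simp: e_def sum_subtractf)
  have "{..<n} = H \<union> U \<union> R" "H \<inter> U = {}" "(H \<union> U) \<inter> R = {}"
    using H R by (auto simp: U_def)
  moreover have "finite H" "finite U" "finite R"
    using finite_subset[OF H] finite_subset[OF R] by (auto simp: U_def)
  ultimately have "(\<Sum>j<n. T j) = (\<Sum>j\<in>H. T j) + (\<Sum>j\<in>U. T j) + (\<Sum>j\<in>R. T j)"
    by (metis finite_Un sum.union_disjoint)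
  moreover have "(\<Sum>j\<in>U. T j) = (\<Sum>j\<in>U. int (lam j x) ^ t * (\<Sum>y\<in>G. e j y))"
    using other by (simp add: U_def)
  ultimately show ?thesis
    using all helpers by (simp add: T_def e_def U_def dvd_add_left_iff)
qed

(* Positions of the unknowns of the repair system of a group G containing x: the lost symbols
   (j in H, y in G) and the group sums of the idle nodes j in U, placed at x. *)
definition group_positions :: "nat set \<Rightarrow> nat set \<Rightarrow> nat set \<Rightarrow> nat \<Rightarrow> (nat \<times> nat) set" where
  "group_positions H U G x = (SIGMA j:H \<union> U. if j \<in> H then G else {x})"

lemma card_group_positions:
  assumes "finite H" "finite U" "finite G" and "H \<inter> U = {}"
  shows "card (group_positions H U G x) = card H * card G + card U"
proof -
  have "card (group_positions H U G x) =
        (\<Sum>j\<in>H. card (if j \<in> H then G else {x})) + (\<Sum>j\<in>U. card (if j \<in> H then G else {x}))"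
    using assms by (simp add: group_positions_def sum.union_disjoint)
  also have "\<dots> = card H * card G + (\<Sum>j\<in>U. 1)"
    using assms(4) by (intro arg_cong2[where f = "(+)"] sum.cong) auto
  finally show ?thesis
    by simp
qed

lemma inj_on_group_positions:
  assumes node: "\<forall>i<n. \<forall>j<n. \<forall>y<l. \<forall>y'<l. lam i y = lam j y' \<longrightarrow> i = j"
    and "H \<union> U \<subseteq> {..<n}" and G: "G \<subseteq> {..<l}" "x \<in> G" and inj: "\<forall>j\<in>H. inj_on (lam j) G"
  shows "inj_on (\<lambda>(j, y). lam j y) (group_positions H U G x)"
proof (rule inj_onI, clarify)
  fix j y j' y' assume q: "(j, y) \<in> group_positions H U G x" "(j', y') \<in> group_positions H U G x"
    and eq: "lam j y = lam j' y'"
  have "y \<in> G" "y' \<in> G" "j < n" "j' < n"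
    using q assms(2) G(2) by (auto simp: group_positions_def split: if_splits)
  then have "j = j'"
    using node eq G(1) by (meson lessThan_iff subsetD)
  then show "j = j' \<and> y = y'"
    using q eq inj \<open>y \<in> G\<close> \<open>y' \<in> G\<close> by (auto simp: group_positions_def inj_on_def split: if_splits)
qed

lemma parity_code_group_repair:
  assumes p: "prime p"
    and c: "c \<in> parity_code p n r l lam" and c': "c' \<in> parity_code p n r l lam"
    and less: "\<forall>i<n. \<forall>y<l. lam i y < p"
    and node: "\<forall>i<n. \<forall>j<n. \<forall>y<l. \<forall>y'<l. lam i y = lam j y' \<longrightarrow> i = j"
    and H: "H \<subseteq> {..<n}" and R: "R \<subseteq> {..<n} - H"
    and G: "G \<subseteq> {..<l}" "x \<in> G"
    and const: "\<forall>j\<in>{..<n} - H. \<forall>y\<in>G. lam j y = lam j x"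
    and inj: "\<forall>j\<in>H. inj_on (lam j) G"
    and count: "card H * card G + card ({..<n} - H - R) \<le> r"
    and sums: "\<forall>j\<in>R. int p dvd (\<Sum>y\<in>G. int (c j y) - int (c' j y))"
  shows "\<forall>i\<in>H. \<forall>y\<in>G. c i y = c' i y"
proof -
  define U where "U = {..<n} - H - R"
  define P where "P = group_positions H U G x"
  define e where "e j y = int (c j y) - int (c' j y)" for j y
  define z where "z = (\<lambda>(j, y). if j \<in> H then e j y else \<Sum>y'\<in>G. e j y')"
  define mu where "mu = (\<lambda>(j, y). lam j y)"
  have fin: "finite H" "finite U" "finite G"
    using H G(1) finite_subset by (auto simp: U_def)
  have HU: "H \<inter> U = {}" and HUn: "H \<union> U \<subseteq> {..<n}"
    using H by (auto simp: U_def)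
  have "card P \<le> r"
    using count card_group_positions[OF fin HU] by (simp add: P_def U_def)
  moreover have "inj_on (\<lambda>q. int (mu q) mod int p) P"
  proof (rule inj_on_int_mod_if_less)
    show "inj_on mu P"
      unfolding mu_def P_def by (rule inj_on_group_positions[OF node HUn G inj])
    show "\<forall>q\<in>P. mu q < p"
      using less HUn G by (auto simp: mu_def P_def group_positions_def split: if_splits)
  qed
  moreover have "int p dvd (\<Sum>q\<in>P. int (mu q) ^ t * z q)" if "t < r" for t
  proof -
    have "(\<Sum>q\<in>P. int (mu q) ^ t * z q) =
          (\<Sum>j\<in>H \<union> U. \<Sum>y\<in>(if j \<in> H then G else {x}). int (lam j y) ^ t * z (j, y))"
      unfolding mu_def P_def group_positions_def using fin by (subst sum.Sigma) (auto simp: split_def)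
    also have "\<dots> = (\<Sum>j\<in>H. \<Sum>y\<in>G. int (lam j y) ^ t * e j y) +
                     (\<Sum>j\<in>U. int (lam j x) ^ t * (\<Sum>y\<in>G. e j y))"
      using fin HU by (subst sum.union_disjoint) (auto intro!: arg_cong2[where f = "(+)"] sum.cong simp: z_def)
    finally show ?thesis
      using parity_check_group_sum[OF c c' H R G(1) const sums that] by (simp add: e_def U_def)
  qed
  moreover have "finite P"
    using fin by (simp add: P_def group_positions_def)
  ultimately have "\<forall>q\<in>P. int p dvd z q"
    using p by (intro vandermonde_unique_mod) auto
  then have "int p dvd e i y" if "i \<in> H" "y \<in> G" for i y
    using that by (force simp: P_def group_positions_def z_def)
  then show ?thesis
    using H G(1)
    by (auto simp: e_def intro!: nat_eq_if_dvd_diff[where p = p] parity_code_less[OF c] parity_code_less[OF c'])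
qed

definition digit :: "nat \<Rightarrow> nat \<Rightarrow> nat \<Rightarrow> nat" where
  "digit r i x = x div r ^ i mod r"

definition eval_point :: "nat \<Rightarrow> nat \<Rightarrow> nat \<Rightarrow> nat" where
  "eval_point r i x = i * r + digit r i x"

lemma digit_less: "0 < r \<Longrightarrow> digit r i x < r"
  by (simp add: digit_def)

lemma eval_point_less:
  assumes "0 < r" and "i < n"
  shows "eval_point r i x < n * r"
proof -
  have "eval_point r i x < Suc i * r"
    using digit_less[OF assms(1)] by (simp add: eval_point_def)
  also have "\<dots> \<le> n * r"
    using assms(2) by (intro mult_right_mono) auto
  finally show ?thesis .
qed

lemma eval_point_eq_iff:
  assumes "0 < r"
  shows "eval_point r i x = eval_point r j y \<longleftrightarrow> i = j \<and> digit r i x = digit r j y"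
proof
  assume eq: "eval_point r i x = eval_point r j y"
  have "eval_point r i x div r = i" "eval_point r j y div r = j"
    using assms digit_less[OF assms] by (simp_all add: eval_point_def)
  with eq show "i = j \<and> digit r i x = digit r j y"
    by (simp add: eval_point_def)
qed (auto simp: eval_point_def)

lemma mds_parity_code_eval_point:
  assumes "prime p" and "n * r < p" and "r = n - k" and "k < n"
  shows "mds_array_code (prime_field p) n k l (parity_code p n r l (eval_point r))"
proof -
  have r0: "0 < r"
    using assms(3,4) by simp
  have "\<forall>x<l. inj_on (\<lambda>i. eval_point r i x) {..<n}"
    by (auto simp: inj_on_def eval_point_eq_iff[OF r0])
  moreover have "\<forall>i<n. \<forall>x<l. eval_point r i x < p"
    using eval_point_less[OF r0] assms(2) by (meson less_trans)
  ultimately show ?thesis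
    using mds_parity_code[OF assms(1)] assms(3,4) by simp
qed

lemma digit_Suc: "digit r (Suc j) x = digit r j (x div r)"
  by (simp add: digit_def div_mult2_eq)

lemma eq_if_digits_eq:
  "(\<forall>j<n. digit r j x = digit r j y) \<Longrightarrow> x div r ^ n = y div r ^ n \<Longrightarrow> x = y"
proof (induction n arbitrary: x y)
  case (Suc n)
  have "\<forall>j<n. digit r j (x div r) = digit r j (y div r)"
    using Suc.prems(1) by (auto simp flip: digit_Suc)
  moreover have "x div r div r ^ n = y div r div r ^ n"
    using Suc.prems(2) by (simp add: div_mult2_eq)
  ultimately have "x div r = y div r"
    by (rule Suc.IH)
  moreover have "x mod r = y mod r"
    using Suc.prems(1) by (auto simp: digit_def)
  ultimately show ?case
    by (metis div_mult_mod_eq)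
qed simp

lemma shifted_mod_cancel:
  fixes a b d e r :: nat
  assumes "a < r" "b < r" "d < r" "e < r" and eq: "(a + r - d) mod r = (b + r - e) mod r"
  shows "a = b \<longleftrightarrow> d = e"
proof -
  have "int (a + r - d) = (int a - int d) + int r" "int (b + r - e) = (int b - int e) + int r"
    using assms by auto
  moreover have "int (a + r - d) mod int r = int (b + r - e) mod int r"
    using eq by (metis of_nat_mod)
  ultimately have "(int a - int d) mod int r = (int b - int e) mod int r"
    by simp
  then have "int r dvd (int a - int b) - (int d - int e)"
    by (simp add: mod_eq_dvd_iff algebra_simps)
  then show ?thesis
    using assms(1-4) by (auto intro: nat_eq_if_dvd_diff simp: dvd_diff_commute)
qed

lemma eq_if_div_eq_mod_eq:
  fixes A B s r :: nat
  assumes "0 < s" "s \<le> r" "A div s = B div s" "A mod r = B mod r"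
  shows "A = B"
proof -
  have "int A = int (A div s * s) + int (A mod s)" "int B = int (B div s * s) + int (B mod s)"
    by (simp_all only: of_nat_add[symmetric] div_mult_mod_eq)
  then have "int A - int B = int (A mod s) - int (B mod s)"
    using assms(3) by simp
  moreover have "int A mod int r = int B mod int r"
    using assms(4) by (metis of_nat_mod)
  moreover have "A mod s < r" "B mod s < r"
    using assms(1,2) by (meson mod_less_divisor less_le_trans)+
  ultimately have "A mod s = B mod s"
    by (intro nat_eq_if_dvd_diff[where p = r]) (simp_all add: mod_eq_dvd_iff)
  with assms(3) show ?thesis
    by (metis div_mult_mod_eq)
qed

(* Digits relative to the digit of the anchor node i0: invariant under shifting all digits at H
   by a common amount mod r (adding r avoids truncated subtraction). *)
definition relative_digits :: "nat \<Rightarrow> nat \<Rightarrow> nat set \<Rightarrow> nat \<Rightarrow> nat \<Rightarrow> nat \<Rightarrow> nat" where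
  "relative_digits r n H i0 x = (\<lambda>j\<in>{..<n} - {i0}.
     if j \<in> H then (digit r j x + r - digit r i0 x) mod r else digit r j x)"

definition anchor :: "nat \<Rightarrow> nat \<Rightarrow> nat \<Rightarrow> nat \<Rightarrow> nat" where
  "anchor r n i0 x = x div r ^ n * r + digit r i0 x"

definition repair_key :: "nat \<Rightarrow> nat \<Rightarrow> nat set \<Rightarrow> nat \<Rightarrow> nat \<Rightarrow> nat \<Rightarrow> (nat \<Rightarrow> nat) \<times> nat" where
  "repair_key r n H i0 s x = (relative_digits r n H i0 x, anchor r n i0 x div s)"

lemma anchor_div: "0 < r \<Longrightarrow> anchor r n i0 x div r = x div r ^ n"
  by (simp add: anchor_def digit_less)

lemma anchor_mod: "0 < r \<Longrightarrow> anchor r n i0 x mod r = digit r i0 x"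
  by (simp add: anchor_def digit_less)

lemma digit_eq_iff_if_relative_digits_eq:
  assumes r: "0 < r" and "j \<in> H" "j < n" "j \<noteq> i0"
    and rel: "relative_digits r n H i0 x = relative_digits r n H i0 y"
  shows "digit r j x = digit r j y \<longleftrightarrow> digit r i0 x = digit r i0 y"
proof -
  have "(digit r j x + r - digit r i0 x) mod r = (digit r j y + r - digit r i0 y) mod r"
    using fun_cong[OF rel, of j] assms(2-4) by (simp add: relative_digits_def)
  then show ?thesis
    by (rule shifted_mod_cancel[OF digit_less[OF r] digit_less[OF r] digit_less[OF r] digit_less[OF r]])
qed

lemma eq_if_relative_digits_anchor_eq:
  assumes r: "0 < r" and "i0 \<in> H" and "H \<subseteq> {..<n}"
    and rel: "relative_digits r n H i0 x = relative_digits r n H i0 y"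
    and anchor: "anchor r n i0 x = anchor r n i0 y"
  shows "x = y"
proof (rule eq_if_digits_eq)
  have d0: "digit r i0 x = digit r i0 y"
    using anchor_mod[OF r] anchor by metis
  show "\<forall>j<n. digit r j x = digit r j y"
  proof (intro allI impI)
    fix j assume "j < n"
    show "digit r j x = digit r j y"
    proof (cases "j = i0")
      case False
      then show ?thesis
        using fun_cong[OF rel, of j] digit_eq_iff_if_relative_digits_eq[OF r _ \<open>j < n\<close> False rel] d0
        by (cases "j \<in> H") (auto simp: relative_digits_def \<open>j < n\<close>)
    qed (simp add: d0)
  qed
  show "x div r ^ n = y div r ^ n"
    using anchor_div[OF r] anchor by metis
qed

lemma eq_if_repair_key_eq_digit_eq:
  assumes r: "0 < r" and "i0 \<in> H" and "H \<subseteq> {..<n}" and s: "0 < s" "s \<le> r"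
    and key: "repair_key r n H i0 s x = repair_key r n H i0 s y"
    and "i \<in> H" and di: "digit r i x = digit r i y"
  shows "x = y"
proof -
  have rel: "relative_digits r n H i0 x = relative_digits r n H i0 y"
    and div: "anchor r n i0 x div s = anchor r n i0 y div s"
    using key by (simp_all add: repair_key_def)
  have "digit r i0 x = digit r i0 y"
  proof (cases "i = i0")
    case False
    then show ?thesis
      using digit_eq_iff_if_relative_digits_eq[OF r \<open>i \<in> H\<close> _ False rel] \<open>H \<subseteq> {..<n}\<close> \<open>i \<in> H\<close> di by auto
  qed (use di in simp)
  then have "anchor r n i0 x = anchor r n i0 y"
    by (intro eq_if_div_eq_mod_eq[OF s div]) (simp add: anchor_mod[OF r])
  with assms(2,3) rel show ?thesis
    by (rule eq_if_relative_digits_anchor_eq[OF r])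
qed

lemma card_repair_key_fiber:
  assumes r: "0 < r" and "i0 \<in> H" and "H \<subseteq> {..<n}" and s: "0 < s"
  shows "card {y. y < l \<and> repair_key r n H i0 s y = repair_key r n H i0 s x} \<le> s"
proof -
  let ?G = "{y. y < l \<and> repair_key r n H i0 s y = repair_key r n H i0 s x}"
  define q where "q = anchor r n i0 x div s"
  have "inj_on (anchor r n i0) ?G"
    using eq_if_relative_digits_anchor_eq[OF r assms(2,3)] by (auto simp: inj_on_def repair_key_def)
  moreover have "anchor r n i0 ` ?G \<subseteq> {q * s..<q * s + s}"
  proof
    fix v assume "v \<in> anchor r n i0 ` ?G"
    then have "v div s = q"
      by (auto simp: q_def repair_key_def)
    then have "v = q * s + v mod s"
      by (metis div_mult_mod_eq)
    then show "v \<in> {q * s..<q * s + s}"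
      using mod_less_divisor[OF s, of v] by (simp only: atLeastLessThan_iff) linarith
  qed
  ultimately have "card ?G \<le> card {q * s..<q * s + s}"
    by (intro card_inj_on_le) auto
  then show ?thesis
    by simp
qed

lemma card_repair_key_image:
  assumes r: "0 < r" and "i0 < n" and s: "0 < s" "s dvd L"
  shows "card (repair_key r n H i0 s ` {..<L * r ^ n}) \<le> L * r ^ n div s"
proof -
  define W where "W = ({..<n} - {i0}) \<rightarrow>\<^sub>E {..<r}"
  have "repair_key r n H i0 s ` {..<L * r ^ n} \<subseteq> W \<times> {..<L div s * r}"
  proof (rule image_subsetI)
    fix x assume x: "x \<in> {..<L * r ^ n}"
    have rel: "relative_digits r n H i0 x \<in> W"
      using r digit_less[OF r] unfolding W_def relative_digits_def by (simp add: restrict_PiE_iff)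
    have "x div r ^ n < L"
      using x by (simp add: less_mult_imp_div_less)
    have "anchor r n i0 x < x div r ^ n * r + r"
      using digit_less[OF r] by (simp add: anchor_def)
    also have "\<dots> \<le> L * r"
      using \<open>x div r ^ n < L\<close> by (metis Suc_leI mult_Suc mult_le_mono1 add.commute)
    finally have "anchor r n i0 x div s < L div s * r"
      using s by (intro less_mult_imp_div_less) (simp add: algebra_simps)
    with rel show "repair_key r n H i0 s x \<in> W \<times> {..<L div s * r}"
      by (simp add: repair_key_def)
  qed
  moreover have "finite (W \<times> {..<L div s * r})"
    by (simp add: W_def finite_PiE)
  moreover have "card (W \<times> {..<L div s * r}) = L * r ^ n div s"
  proof -
    have "card W = r ^ (n - 1)"
      using \<open>i0 < n\<close> by (simp add: W_def card_PiE)
    moreover have "r ^ n = r ^ (n - 1) * r"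
      using \<open>i0 < n\<close> by (metis Suc_pred' gr_zeroI less_zeroE power_Suc2)
    ultimately show ?thesis
      using s by (elim dvdE) (simp add: card_cartesian_product mult.assoc)
  qed
  ultimately show ?thesis
    by (metis card_mono)
qed

lemma repair_groups:
  assumes r: "0 < r" and H: "H \<subseteq> {..<n}" "H \<noteq> {}" and s: "0 < s" "s \<le> r" "s dvd L"
  obtains g :: "nat \<Rightarrow> nat" where
    "\<And>x. x < L * r ^ n \<Longrightarrow> g x < L * r ^ n div s"
    "\<And>x. x < L * r ^ n \<Longrightarrow> card {y. y < L * r ^ n \<and> g y = g x} \<le> s"
    "\<And>x y j. x < L * r ^ n \<Longrightarrow> y < L * r ^ n \<Longrightarrow> g x = g y \<Longrightarrow> j \<in> {..<n} - H \<Longrightarrow>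
       digit r j x = digit r j y"
    "\<And>x y j. x < L * r ^ n \<Longrightarrow> y < L * r ^ n \<Longrightarrow> g x = g y \<Longrightarrow> j \<in> H \<Longrightarrow>
       digit r j x = digit r j y \<Longrightarrow> x = y"
proof -
  obtain i0 where i0: "i0 \<in> H"
    using H(2) by blast
  let ?l = "L * r ^ n" and ?key = "repair_key r n H i0 s"
  have "card (?key ` {..<?l}) \<le> card {..<?l div s}"
    using card_repair_key_image[OF r _ s(1,3)] i0 H(1) by auto
  then obtain g0 where g0: "inj_on g0 (?key ` {..<?l})" "g0 ` ?key ` {..<?l} \<subseteq> {..<?l div s}"
    by (metis card_le_inj finite_imageI finite_lessThan)
  have same: "g0 (?key x) = g0 (?key y) \<longleftrightarrow> ?key x = ?key y" if "x < ?l" "y < ?l" for x y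
    using g0(1) that by (auto simp: inj_on_def)
  show thesis
  proof (rule that[of "g0 \<circ> ?key"])
    show "(g0 \<circ> ?key) x < ?l div s" if "x < ?l" for x
      using g0(2) that by auto
    show "card {y. y < ?l \<and> (g0 \<circ> ?key) y = (g0 \<circ> ?key) x} \<le> s" if "x < ?l" for x
      using card_repair_key_fiber[OF r i0 H(1) s(1), of ?l x] same[OF _ that]
      by (simp add: conj_commute cong: conj_cong)
    show "digit r j x = digit r j y"
      if "x < ?l" "y < ?l" "(g0 \<circ> ?key) x = (g0 \<circ> ?key) y" "j \<in> {..<n} - H" for x y j
    proof -
      have "relative_digits r n H i0 x j = relative_digits r n H i0 y j"
        using same[of x y] that by (simp add: repair_key_def)
      then show ?thesis
        using that(4) i0 by (auto simp: relative_digits_def split: if_splits)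
    qed
    show "x = y" if "x < ?l" "y < ?l" "(g0 \<circ> ?key) x = (g0 \<circ> ?key) y" "j \<in> H"
      "digit r j x = digit r j y" for x y j
      using eq_if_repair_key_eq_digit_eq[OF r i0 H(1) s(1,2) _ that(4,5)] same[of x y] that(1-3)
      by simp
  qed
qed

lemma group_sums_repair:
  assumes p: "prime p" "n * r < p" and r: "0 < r"
    and H: "H \<subseteq> {..<n}" and R: "R \<subseteq> {..<n} - H"
    and count: "card H * s + card ({..<n} - H - R) \<le> r"
    and g_card: "\<And>x. x < l \<Longrightarrow> card {y. y < l \<and> g y = g x} \<le> s"
    and g_other: "\<And>x y j. x < l \<Longrightarrow> y < l \<Longrightarrow> g x = g y \<Longrightarrow> j \<in> {..<n} - H \<Longrightarrow>
                    digit r j x = digit r j y"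
    and g_failed: "\<And>x y j. x < l \<Longrightarrow> y < l \<Longrightarrow> g x = g y \<Longrightarrow> j \<in> H \<Longrightarrow>
                    digit r j x = digit r j y \<Longrightarrow> x = y"
    and c: "c \<in> parity_code p n r l (eval_point r)" and c': "c' \<in> parity_code p n r l (eval_point r)"
    and sent: "\<And>j x. j \<in> R \<Longrightarrow> x < l \<Longrightarrow>
                 (\<Sum>y | y < l \<and> g y = g x. c j y) mod p = (\<Sum>y | y < l \<and> g y = g x. c' j y) mod p"
  shows "\<forall>i\<in>H. c i = c' i"
proof (intro ballI ext)
  fix i x assume i: "i \<in> H"
  show "c i x = c' i x"
  proof (cases "x < l")
    case True
    define G where "G = {y. y < l \<and> g y = g x}"
    have G: "G \<subseteq> {..<l}" "x \<in> G"
      using True by (auto simp: G_def)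
    have "card H * card G \<le> card H * s"
      using g_card[OF True] by (simp add: G_def)
    with count have count_G: "card H * card G + card ({..<n} - H - R) \<le> r"
      by linarith
    have sums: "int p dvd (\<Sum>y\<in>G. int (c j y) - int (c' j y))" if "j \<in> R" for j
      using sent[OF that True] unfolding G_def
      by (simp add: sum_subtractf flip: of_nat_sum) (metis cong_def cong_int_iff cong_iff_dvd_diff)
    have "\<forall>i\<in>H. \<forall>y\<in>G. c i y = c' i y"
    proof (rule parity_code_group_repair[OF p(1) c c' _ _ H R G _ _ count_G])
      show "\<forall>i<n. \<forall>y<l. eval_point r i y < p"
        using eval_point_less[OF r] p(2) by (meson less_trans)
      show "\<forall>i<n. \<forall>j<n. \<forall>y<l. \<forall>y'<l. eval_point r i y = eval_point r j y' \<longrightarrow> i = j"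
        using eval_point_eq_iff[OF r] by blast
      show "\<forall>j\<in>{..<n} - H. \<forall>y\<in>G. eval_point r j y = eval_point r j x"
      proof (intro ballI)
        fix j y assume "j \<in> {..<n} - H" "y \<in> G"
        then have "digit r j y = digit r j x"
          using g_other[of y x j] True by (simp add: G_def)
        then show "eval_point r j y = eval_point r j x"
          by (simp add: eval_point_def)
      qed
      show "\<forall>j\<in>H. inj_on (eval_point r j) G"
      proof (intro ballI inj_onI)
        fix j y y' assume "j \<in> H" "y \<in> G" "y' \<in> G" "eval_point r j y = eval_point r j y'"
        then show "y = y'"
          using g_failed[of y y' j] by (simp add: G_def eval_point_eq_iff[OF r])
      qed
    qed (use sums in blast)
    then show ?thesis
      using i G(2) by blast
  qed (use i H in \<open>auto simp: parity_code_eq_0[OF c] parity_code_eq_0[OF c']\<close>)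
qed

lemma card_idle_nodes:
  assumes "H \<subseteq> {..<n}" and "R \<subseteq> {..<n} - H"
  shows "card ({..<n} - H - R) = n - (card H + card R)"
proof -
  have "card (H \<union> R) = card H + card R"
    using assms finite_subset[OF assms(1)] finite_subset[OF assms(2)] by (subst card_Un_disjoint) auto
  moreover have "{..<n} - H - R = {..<n} - (H \<union> R)" and "H \<union> R \<subseteq> {..<n}"
    using assms by auto
  ultimately show ?thesis
    by (metis card_Diff_subset card_lessThan finite_subset finite_lessThan)
qed

lemma repair_group_size:
  fixes h k d n s :: nat
  assumes "1 \<le> h" "h \<le> n - k" "k \<le> d" "d \<le> n - h" and hs: "h * s = d - k + h"
  shows "0 < s" and "s \<le> n - k"
proof -
  show "0 < s"
    using assms(1) hs by (cases s) auto
  have "s \<le> h * s"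
    using assms(1) by simp
  also have "h * s \<le> n - k"
    using assms(2-4) unfolding hs by linarith
  finally show "s \<le> n - k" .
qed

lemma optimal_repair_parity_code:
  assumes p: "prime p" "n * r < p" and r: "r = n - k" and l: "l = L * r ^ n"
    and h: "1 \<le> h" "h \<le> n - k" "k \<le> d" "d \<le> n - h" and s: "h * s = d - k + h" "s dvd L"
  shows "optimal_repair (prime_field p) n k l (parity_code p n r l (eval_point r)) h d"
proof -
  let ?C = "parity_code p n r l (eval_point r)"
  have s0: "0 < s" and s_le: "s \<le> r"
    using repair_group_size[OF h s(1)] r by auto
  have r0: "0 < r"
    using s0 s_le by simp
  have beta: "h * l div (d - k + h) = l div s"
    using s(1) h(1) by (metis div_mult_mult1 not_one_le_zero neq0_conv)
  have "\<exists>f :: nat \<Rightarrow> (nat \<Rightarrow> nat) \<Rightarrow> nat \<Rightarrow> nat.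
          (\<forall>j\<in>R. \<forall>c\<in>?C. \<forall>t < l div s. f j (c j) t \<in> carrier (prime_field p)) \<and>
          (\<forall>c\<in>?C. \<forall>c'\<in>?C. (\<forall>j\<in>R. \<forall>t < l div s. f j (c j) t = f j (c' j) t) \<longrightarrow>
             (\<forall>i\<in>H. c i = c' i))"
    if HR: "H \<subseteq> {..<n}" "card H = h" "R \<subseteq> {..<n} - H" "card R = d" for H R
  proof -
    have "H \<noteq> {}"
      using HR(2) h(1) by auto
    then obtain g where g:
      "\<And>x. x < l \<Longrightarrow> g x < l div s"
      "\<And>x. x < l \<Longrightarrow> card {y. y < l \<and> g y = g x} \<le> s"
      "\<And>x y j. x < l \<Longrightarrow> y < l \<Longrightarrow> g x = g y \<Longrightarrow> j \<in> {..<n} - H \<Longrightarrow> digit r j x = digit r j y"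
      "\<And>x y j. x < l \<Longrightarrow> y < l \<Longrightarrow> g x = g y \<Longrightarrow> j \<in> H \<Longrightarrow> digit r j x = digit r j y \<Longrightarrow> x = y"
      using repair_groups[OF r0 HR(1) _ s0 s_le s(2)] unfolding l by blast
    have count: "card H * s + card ({..<n} - H - R) \<le> r"
      using card_idle_nodes[OF HR(1,3)] HR(2,4) h s(1) r by simp
    define f where "f j v t = (\<Sum>y | y < l \<and> g y = t. v y) mod p" for j :: nat and v :: "nat \<Rightarrow> nat" and t
    show ?thesis
    proof (intro exI[of _ f] conjI ballI impI)
      fix c c' i assume c: "c \<in> ?C" and c': "c' \<in> ?C"
        and sent: "\<forall>j\<in>R. \<forall>t<l div s. f j (c j) t = f j (c' j) t" and "i \<in> H"
      have "\<forall>i\<in>H. c i = c' i"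
      proof (rule group_sums_repair[OF p r0 HR(1,3) count g(2-4) c c'])
        show "(\<Sum>y | y < l \<and> g y = g x. c j y) mod p = (\<Sum>y | y < l \<and> g y = g x. c' j y) mod p"
          if "j \<in> R" "x < l" for j x
          using sent g(1) that unfolding f_def by blast
      qed
      with \<open>i \<in> H\<close> show "c i = c' i"
        by blast
    qed (simp add: f_def prime_gt_0_nat[OF p(1)])
  qed
  then show ?thesis
    unfolding optimal_repair_def beta by blast
qed

theorem corollary1:
  fixes n k :: nat
  assumes "n > k" and "k \<ge> 1"
  shows "\<exists>(F :: nat ring) C. field F \<and> finite (carrier F) \<and>
           mds_array_code F n k (Lcm {1..n - k} * (n - k) ^ n) C \<and>
           (\<forall>h d. 1 \<le> h \<and> h \<le> n - k \<and> k \<le> d \<and> d \<le> n - h \<and> h dvd (d - k) \<longrightarrow>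
              optimal_repair F n k (Lcm {1..n - k} * (n - k) ^ n) C h d)"
proof -
  define r where "r = n - k"
  define l where "l = Lcm {1..r} * r ^ n"
  obtain p :: nat where p: "prime p" "n * r < p"
    using bigger_prime by blast
  let ?C = "parity_code p n r l (eval_point r)"
  have "mds_array_code (prime_field p) n k l ?C"
    by (rule mds_parity_code_eval_point[OF p r_def assms(1)])
  moreover have "optimal_repair (prime_field p) n k l ?C h d"
    if hd: "1 \<le> h" "h \<le> n - k" "k \<le> d" "d \<le> n - h" "h dvd (d - k)" for h d
  proof (rule optimal_repair_parity_code[OF p r_def l_def hd(1-4)])
    show hs: "h * ((d - k) div h + 1) = d - k + h"
      using hd(5) by simp
    show "(d - k) div h + 1 dvd Lcm {1..r}"
      using repair_group_size[OF hd(1-4) hs] by (intro dvd_Lcm) (simp add: r_def)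
  qed
  moreover have "field (prime_field p)" and "finite (carrier (prime_field p))"
    using field_prime_field[OF p(1)] by simp_all
  ultimately show ?thesis
    unfolding l_def r_def by blast
qed

end
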